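(* Let $G$ be the cycle with vertices $u,v,w$ and edges $uv,vw,wu$, and let $H$ have OD-pairs $(u,w),(u,v),(w,v)$. Take two classes: class 1 consists of $I_{(u,v)}$ with $\lambda(I_{(u,v)})=1.5$; class 2 consists of $I_{(u,w)}\cup I_{(w,v)}$ with $\lambda(I_{(u,w)})=\lambda(I_{(w,v)})=1$. Class 1 costs: $c_{(u,w)}(x)=x$, $c_{(w,v)}(x)=x+48$, $c_{(u,v)}(x)=24x+7$. Class 2 costs: $c_{(u,w)}(x)=22x$, $c_{(w,v)}(x)=22x$, $c_{(w,u)}(x)=x$, $c_{(u,v)}(x)=x+26$, $c_{(v,w)}(x)=x$ (costs on arcs not used by any route of a class are arbitrary nonnegative continuous strictly increasing). Let $\sigma$ have class 1 users on the route $u\to v$ and class 2 users on the routes $u\to w$ and $w\to v$ respectively; let $\hat\sigma$ have class 1 users on the route $u\to w\to v$, users of $I_{(u,w)}$ on $u\to v\to w$ and users of $I_{(w,v)}$ on $w\to u\to v$. Then $\sigma$ and $\hat\sigma$ are both equilibria, and they induce different flows (e.g. on arc $(u,v)$ the flows are $1.5$ and $2$). In particular multiple equilibrium flows can occur on a ring with only two classes of users.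
   Context: Model: the directed version of $G$ has the six arcs $(u,v),(v,u),(v,w),(w,v),(u,w),(w,u)$; routes of an OD-pair $(o,d)$ are the directed $(o,d)$-paths. Users form a bounded interval with Lebesgue measure $\lambda$; the flow on an arc is the measure of users whose route contains it; a user's cost for a route is the sum over its arcs of his (class-dependent) cost function evaluated at the arc flow; an equilibrium is a strategy profile in which every user's route has minimal cost among the routes of his OD-pair. *)

theory Defs
  imports "HOL-Analysis.Analysis"
begin

datatype node = U | V | W

type_synonym arc = "node \<times> node"

definition G_arcs :: "arc set" where
  "G_arcs = {(x, y). x \<noteq> y}"

text \<open>A directed path is given by its (distinct) vertex sequence; its arcs are the
  consecutive pairs.\<close>
definition route_arcs :: "node list \<Rightarrow> arc set" where
  "route_arcs p = set (zip p (tl p))"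

definition is_route :: "node \<Rightarrow> node \<Rightarrow> node list \<Rightarrow> bool" where
  "is_route s t p \<longleftrightarrow> distinct p \<and> 2 \<le> length p \<and> hd p = s \<and> last p = t
      \<and> route_arcs p \<subseteq> G_arcs"

text \<open>Users form the set I (a bounded interval of reals, Lebesgue measure);
  od i is the OD-pair of user i, sigma i his route.\<close>
definition strategy_profile :: "real set \<Rightarrow> (real \<Rightarrow> arc) \<Rightarrow> (real \<Rightarrow> node list) \<Rightarrow> bool" where
  "strategy_profile I od \<sigma> \<longleftrightarrow>
     (\<forall>i\<in>I. is_route (fst (od i)) (snd (od i)) (\<sigma> i)) \<and>
     (\<forall>a. {i\<in>I. a \<in> route_arcs (\<sigma> i)} \<in> sets lebesgue)"

definition arc_flow :: "real set \<Rightarrow> (real \<Rightarrow> node list) \<Rightarrow> arc \<Rightarrow> real" where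
  "arc_flow I \<sigma> a = measure lebesgue {i\<in>I. a \<in> route_arcs (\<sigma> i)}"

definition route_cost :: "(nat \<Rightarrow> arc \<Rightarrow> real \<Rightarrow> real) \<Rightarrow> nat \<Rightarrow> (arc \<Rightarrow> real) \<Rightarrow> node list \<Rightarrow> real" where
  "route_cost c k f p = (\<Sum>a\<in>route_arcs p. c k a (f a))"

definition equilibrium ::
  "real set \<Rightarrow> (real \<Rightarrow> arc) \<Rightarrow> (real \<Rightarrow> nat) \<Rightarrow> (nat \<Rightarrow> arc \<Rightarrow> real \<Rightarrow> real)
     \<Rightarrow> (real \<Rightarrow> node list) \<Rightarrow> bool" where
  "equilibrium I od cls c \<sigma> \<longleftrightarrow> strategy_profile I od \<sigma> \<and>
     (\<forall>i\<in>I. \<forall>p. is_route (fst (od i)) (snd (od i)) p \<longrightarrow>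
        route_cost c (cls i) (arc_flow I \<sigma>) (\<sigma> i) \<le> route_cost c (cls i) (arc_flow I \<sigma>) p)"

definition I_uv :: "real set" where "I_uv = {0..<3/2}"
definition I_uw :: "real set" where "I_uw = {3/2..<5/2}"
definition I_wv :: "real set" where "I_wv = {5/2..<7/2}"

definition users :: "real set" where "users = I_uv \<union> I_uw \<union> I_wv"

definition od_ex :: "real \<Rightarrow> arc" where
  "od_ex i = (if i \<in> I_uv then (U, V) else if i \<in> I_uw then (U, W) else (W, V))"

definition cls_ex :: "real \<Rightarrow> nat" where
  "cls_ex i = (if i \<in> I_uv then 1 else 2)"

definition sigma_ex :: "real \<Rightarrow> node list" where
  "sigma_ex i = (if i \<in> I_uv then [U, V] else if i \<in> I_uw then [U, W] else [W, V])"

definition sigma_hat_ex :: "real \<Rightarrow> node list" where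
  "sigma_hat_ex i = (if i \<in> I_uv then [U, W, V] else if i \<in> I_uw then [U, V, W] else [W, U, V])"

definition specified_costs :: "(nat \<Rightarrow> arc \<Rightarrow> real \<Rightarrow> real) \<Rightarrow> bool" where
  "specified_costs c \<longleftrightarrow>
     c 1 (U, W) = (\<lambda>x. x) \<and> c 1 (W, V) = (\<lambda>x. x + 48) \<and> c 1 (U, V) = (\<lambda>x. 24 * x + 7) \<and>
     c 2 (U, W) = (\<lambda>x. 22 * x) \<and> c 2 (W, V) = (\<lambda>x. 22 * x) \<and> c 2 (W, U) = (\<lambda>x. x) \<and>
     c 2 (U, V) = (\<lambda>x. x + 26) \<and> c 2 (V, W) = (\<lambda>x. x)"

definition admissible_cost :: "(real \<Rightarrow> real) \<Rightarrow> bool" where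
  "admissible_cost f \<longleftrightarrow> (\<forall>x\<ge>0. 0 \<le> f x) \<and> continuous_on {0..} f \<and> strict_mono_on {0..} f"

end

theory Submission
  imports Defs
begin

(* Both profiles are constant on each of the three user groups
   I_(u,v), I_(u,w), I_(w,v) (measures 3/2, 1, 1), so the flow on an arc is the
   sum of the measures of the groups whose route uses that arc.  On the triangle
   an (s,t)-route is either the direct arc or the detour through the third
   vertex, so the equilibrium condition reduces to comparing, for each group,
   the cost of its route with these two alternatives. *)

lemma route_arcs_direct [simp]: "route_arcs [x, y] = {(x, y)}"
  and route_arcs_detour [simp]: "route_arcs [x, y, z] = {(x, y), (y, z)}"
  unfolding route_arcs_def by auto

lemma is_route_direct: "s \<noteq> t \<Longrightarrow> is_route s t [s, t]"
  and is_route_detour: "x \<noteq> s \<Longrightarrow> x \<noteq> t \<Longrightarrow> s \<noteq> t \<Longrightarrow> is_route s t [s, x, t]"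
  unfolding is_route_def route_arcs_def G_arcs_def by auto

text \<open>Conversely, since a route is a simple path on three vertices, it has at most
  three vertices; any vertex different from both ends is the only possible
  intermediate one.\<close>
lemma routes_on_triangle:
  assumes route: "is_route s t p" and "x \<noteq> s" "x \<noteq> t"
  shows "p = [s, t] \<or> p = [s, x, t]"
proof -
  have dist: "distinct p" and len: "2 \<le> length p" and ends: "hd p = s" "last p = t"
    using route unfolding is_route_def by auto
  have no_four: "\<not> distinct [a, b, c, d :: node]" for a b c d
    by (cases a; cases b; cases c; cases d) simp_all
  obtain a b r where p: "p = a # b # r"
    using len by (cases p; cases "tl p") auto
  consider "r = []" | y where "r = [y]" | y z r' where "r = y # z # r'"
    by (cases r; cases "tl r") auto
  then show ?thesis
  proof cases
    case 1
    then show ?thesis using p ends by simp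
  next
    case (2 y)
    then have "b \<noteq> s" "b \<noteq> t" "s \<noteq> t" using p dist ends by auto
    then have "b = x"
      using \<open>x \<noteq> s\<close> \<open>x \<noteq> t\<close> by (cases b; cases x; cases s; cases t) simp_all
    then show ?thesis using p ends 2 by simp
  next
    case (3 y z r')
    then have "distinct [a, b, y, z]" using p dist by auto
    then show ?thesis using no_four by blast
  qed
qed

lemma optimal_route_on_triangle:
  assumes "is_route s t p" and "x \<noteq> s" "x \<noteq> t"
    and "route_cost c k f q \<le> route_cost c k f [s, t]"
    and "route_cost c k f q \<le> route_cost c k f [s, x, t]"
  shows "route_cost c k f q \<le> route_cost c k f p"
  using routes_on_triangle[OF assms(1-3)] assms(4,5) by auto

definition grouped :: "(real \<Rightarrow> node list) \<Rightarrow> node list \<Rightarrow> node list \<Rightarrow> node list \<Rightarrow> bool" where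
  "grouped \<sigma> p1 p2 p3 \<longleftrightarrow>
     (\<forall>i\<in>I_uv. \<sigma> i = p1) \<and> (\<forall>i\<in>I_uw. \<sigma> i = p2) \<and> (\<forall>i\<in>I_wv. \<sigma> i = p3)"

lemma lmeasurable_Ico: "{a..<b :: real} \<in> lmeasurable"
  by (rule fmeasurableI2[OF lmeasurable_interval(1)[of a b]]) auto

lemma measure_disjoint_Un:
  assumes "A \<in> fmeasurable M" "B \<in> fmeasurable M" "A \<inter> B = {}"
  shows "measure M (A \<union> B) = measure M A + measure M B"
  using measure_Un3[OF assms(1,2)] assms(3) by simp

lemma grouped_users_on_arc:
  assumes "grouped \<sigma> p1 p2 p3"
  shows "{i\<in>users. a \<in> route_arcs (\<sigma> i)} =
     (if a \<in> route_arcs p1 then I_uv else {}) \<union> (if a \<in> route_arcs p2 then I_uw else {})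
       \<union> (if a \<in> route_arcs p3 then I_wv else {})"
  using assms unfolding grouped_def users_def by auto

lemma grouped_users_on_arc_lmeasurable:
  assumes "grouped \<sigma> p1 p2 p3"
  shows "{i\<in>users. a \<in> route_arcs (\<sigma> i)} \<in> lmeasurable"
  unfolding grouped_users_on_arc[OF assms] I_uv_def I_uw_def I_wv_def
  by (intro fmeasurable.Un) (simp_all add: lmeasurable_Ico)

lemma grouped_arc_flow:
  assumes "grouped \<sigma> p1 p2 p3"
  shows "arc_flow users \<sigma> a =
     (if a \<in> route_arcs p1 then 3/2 else 0) + (if a \<in> route_arcs p2 then 1 else 0)
       + (if a \<in> route_arcs p3 then 1 else 0)"
proof -
  define A where "A = (if a \<in> route_arcs p1 then I_uv else {})"
  define B where "B = (if a \<in> route_arcs p2 then I_uw else {})"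
  define C where "C = (if a \<in> route_arcs p3 then I_wv else {})"
  have fin: "A \<in> lmeasurable" "B \<in> lmeasurable" "C \<in> lmeasurable"
    unfolding A_def B_def C_def I_uv_def I_uw_def I_wv_def by (simp_all add: lmeasurable_Ico)
  have disj: "A \<inter> B = {}" "(A \<union> B) \<inter> C = {}"
    unfolding A_def B_def C_def I_uv_def I_uw_def I_wv_def by auto
  have "arc_flow users \<sigma> a = measure lebesgue (A \<union> B \<union> C)"
    unfolding arc_flow_def grouped_users_on_arc[OF assms] A_def B_def C_def ..
  also have "\<dots> = measure lebesgue A + measure lebesgue B + measure lebesgue C"
    using fin disj by (simp add: measure_disjoint_Un fmeasurable.Un)
  finally show ?thesis
    unfolding A_def B_def C_def I_uv_def I_uw_def I_wv_def by simp
qed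

lemma grouped_equilibrium:
  assumes grouped: "grouped \<sigma> p1 p2 p3"
    and routes: "is_route U V p1" "is_route U W p2" "is_route W V p3"
    and best1: "\<And>p. is_route U V p \<Longrightarrow>
                  route_cost c 1 (arc_flow users \<sigma>) p1 \<le> route_cost c 1 (arc_flow users \<sigma>) p"
    and best2: "\<And>p. is_route U W p \<Longrightarrow>
                  route_cost c 2 (arc_flow users \<sigma>) p2 \<le> route_cost c 2 (arc_flow users \<sigma>) p"
    and best3: "\<And>p. is_route W V p \<Longrightarrow>
                  route_cost c 2 (arc_flow users \<sigma>) p3 \<le> route_cost c 2 (arc_flow users \<sigma>) p"
  shows "equilibrium users od_ex cls_ex c \<sigma>"
proof -
  have groups: "i \<in> users \<Longrightarrow>
      (i \<in> I_uv \<and> od_ex i = (U, V) \<and> cls_ex i = 1 \<and> \<sigma> i = p1) \<or>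
      (i \<in> I_uw \<and> od_ex i = (U, W) \<and> cls_ex i = 2 \<and> \<sigma> i = p2) \<or>
      (i \<in> I_wv \<and> od_ex i = (W, V) \<and> cls_ex i = 2 \<and> \<sigma> i = p3)" for i
    using grouped unfolding grouped_def users_def od_ex_def cls_ex_def I_uv_def I_uw_def I_wv_def
    by auto
  have "strategy_profile users od_ex \<sigma>"
    unfolding strategy_profile_def
  proof (intro conjI ballI allI)
    show "is_route (fst (od_ex i)) (snd (od_ex i)) (\<sigma> i)" if "i \<in> users" for i
      using groups[OF that] routes by auto
    show "{i\<in>users. a \<in> route_arcs (\<sigma> i)} \<in> sets lebesgue" for a
      using grouped_users_on_arc_lmeasurable[OF grouped] by (rule fmeasurableD)
  qed
  moreover have "route_cost c (cls_ex i) (arc_flow users \<sigma>) (\<sigma> i)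
                   \<le> route_cost c (cls_ex i) (arc_flow users \<sigma>) p"
    if "i \<in> users" "is_route (fst (od_ex i)) (snd (od_ex i)) p" for i p
    using groups[OF that(1)] that(2) best1[of p] best2[of p] best3[of p] by auto
  ultimately show ?thesis
    unfolding equilibrium_def by blast
qed

lemma grouped_sigma: "grouped sigma_ex [U, V] [U, W] [W, V]"
  and grouped_sigma_hat: "grouped sigma_hat_ex [U, W, V] [U, V, W] [W, U, V]"
  unfolding grouped_def sigma_ex_def sigma_hat_ex_def I_uv_def I_uw_def I_wv_def by auto

lemma specified_costsD:
  assumes "specified_costs c"
  shows "c 1 (U, W) = (\<lambda>x. x)" "c 1 (W, V) = (\<lambda>x. x + 48)"
    "c 1 (U, V) = (\<lambda>x. 24 * x + 7)"
    "c 2 (U, W) = (\<lambda>x. 22 * x)" "c 2 (W, V) = (\<lambda>x. 22 * x)" "c 2 (W, U) = (\<lambda>x. x)"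
    "c 2 (U, V) = (\<lambda>x. x + 26)" "c 2 (V, W) = (\<lambda>x. x)"
  using assms unfolding specified_costs_def by auto

text \<open>Under sigma the flows are 3/2 on (u,v) and 1 on (u,w) and (w,v): class 1 pays
  43 against 50 for the detour, class-2 users pay 22 against 27.5.\<close>
lemma sigma_equilibrium:
  assumes "specified_costs c"
  shows "equilibrium users od_ex cls_ex c sigma_ex"
  using grouped_sigma
proof (rule grouped_equilibrium)
  \<comment> \<open>the simplifier writes class 1 as Suc 0, so both forms of its costs are needed\<close>
  note costs = route_cost_def grouped_arc_flow[OF grouped_sigma] specified_costsD[OF assms]
    specified_costsD(1-3)[OF assms, unfolded One_nat_def]
  show "is_route U V [U, V]" "is_route U W [U, W]" "is_route W V [W, V]"
    by (simp_all add: is_route_direct)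
  show "route_cost c 1 (arc_flow users sigma_ex) [U, V] \<le> route_cost c 1 (arc_flow users sigma_ex) p"
    if "is_route U V p" for p
    using that by (rule optimal_route_on_triangle[where x=W]) (simp_all add: costs)
  show "route_cost c 2 (arc_flow users sigma_ex) [U, W] \<le> route_cost c 2 (arc_flow users sigma_ex) p"
    if "is_route U W p" for p
    using that by (rule optimal_route_on_triangle[where x=V]) (simp_all add: costs)
  show "route_cost c 2 (arc_flow users sigma_ex) [W, V] \<le> route_cost c 2 (arc_flow users sigma_ex) p"
    if "is_route W V p" for p
    using that by (rule optimal_route_on_triangle[where x=U]) (simp_all add: costs)
qed

text \<open>Under sigma_hat the flows are 3/2 on (u,w) and (w,v), 2 on (u,v), 1 on (v,w)
  and (w,u): class 1 pays 51 against 55 for the direct arc, class-2 users pay 29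
  against 33.\<close>
lemma sigma_hat_equilibrium:
  assumes "specified_costs c"
  shows "equilibrium users od_ex cls_ex c sigma_hat_ex"
  using grouped_sigma_hat
proof (rule grouped_equilibrium)
  note costs = route_cost_def grouped_arc_flow[OF grouped_sigma_hat] specified_costsD[OF assms]
    specified_costsD(1-3)[OF assms, unfolded One_nat_def]
  show "is_route U V [U, W, V]" "is_route U W [U, V, W]" "is_route W V [W, U, V]"
    by (simp_all add: is_route_detour)
  show "route_cost c 1 (arc_flow users sigma_hat_ex) [U, W, V]
          \<le> route_cost c 1 (arc_flow users sigma_hat_ex) p"
    if "is_route U V p" for p
    using that by (rule optimal_route_on_triangle[where x=W]) (simp_all add: costs)
  show "route_cost c 2 (arc_flow users sigma_hat_ex) [U, V, W]
          \<le> route_cost c 2 (arc_flow users sigma_hat_ex) p"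
    if "is_route U W p" for p
    using that by (rule optimal_route_on_triangle[where x=V]) (simp_all add: costs)
  show "route_cost c 2 (arc_flow users sigma_hat_ex) [W, U, V]
          \<le> route_cost c 2 (arc_flow users sigma_hat_ex) p"
    if "is_route W V p" for p
    using that by (rule optimal_route_on_triangle[where x=U]) (simp_all add: costs)
qed

text \<open>Main result: two equilibria with different flows on a ring with two classes.\<close>
theorem mainTheorem16:
  fixes c :: "nat \<Rightarrow> arc \<Rightarrow> real \<Rightarrow> real"
  assumes "specified_costs c"
    and "\<And>k a. k \<in> {1, 2} \<Longrightarrow> a \<in> G_arcs \<Longrightarrow> admissible_cost (c k a)"
  shows "equilibrium users od_ex cls_ex c sigma_ex
       \<and> equilibrium users od_ex cls_ex c sigma_hat_ex
       \<and> arc_flow users sigma_ex (U, V) = 3/2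
       \<and> arc_flow users sigma_hat_ex (U, V) = 2
       \<and> arc_flow users sigma_ex \<noteq> arc_flow users sigma_hat_ex"
proof -
  have flow_sigma: "arc_flow users sigma_ex (U, V) = 3/2"
    by (simp add: grouped_arc_flow[OF grouped_sigma])
  have flow_sigma_hat: "arc_flow users sigma_hat_ex (U, V) = 2"
    by (simp add: grouped_arc_flow[OF grouped_sigma_hat])
  have "arc_flow users sigma_ex \<noteq> arc_flow users sigma_hat_ex"
  proof
    assume "arc_flow users sigma_ex = arc_flow users sigma_hat_ex"
    then have "arc_flow users sigma_ex (U, V) = arc_flow users sigma_hat_ex (U, V)" by simp
    then show False using flow_sigma flow_sigma_hat by simp
  qed
  then show ?thesis
    using sigma_equilibrium[OF assms(1)] sigma_hat_equilibrium[OF assms(1)] flow_sigma flow_sigma_hat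
    by blast
qed

end
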